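(* Assume (H1), (H2.1), (H2.4) and (H3.1). Then there exists a positive integer $N_{0}$ such that, for any $N\ge N_{0}$, the operator $I_{X^{+}}-\mathcal{L}_{N}^{+}\mathcal{F}_{s}V^{+}\colon X^{+}\to X^{+}$ is invertible and $$\|(I_{X^{+}}-\mathcal{L}_{N}^{+}\mathcal{F}_{s}V^{+})^{-1}\|_{X^{+}\leftarrow X^{+}}\le 2\|(I_{X^{+}}-\mathcal{F}_{s}V^{+})^{-1}\|_{X^{+}\leftarrow X^{+}}.$$ Moreover, for each $\phi\in\widehat{X}$, the equation $z=\mathcal{L}_{N}^{+}\mathcal{F}_{s}V(\phi,z)$ has a unique solution $w^{\ast}\in X^{+}$ and $$\|w^{\ast}-z^{\ast}\|_{X^{+}}\le 2\|(I_{X^{+}}-\mathcal{F}_{s}V^{+})^{-1}\|_{X^{+}\leftarrow X^{+}}\,\|\mathcal{L}_{N}^{+}z^{\ast}-z^{\ast}\|_{X^{+}},$$ where $z^{\ast}\in X^{+}$ is the unique solution of $z=\mathcal{F}_{s}V(\phi,z)$.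
   Context: Let $d\ge 1$ be an integer and $\tau>0$, $h>0$ real. $X$, $X^{+}$, $X^{\pm}$ are real normed spaces of functions $[-\tau,0]\to\mathbb{R}^{d}$, $[0,h]\to\mathbb{R}^{d}$, $[-\tau,h]\to\mathbb{R}^{d}$, respectively. $V\colon X\times X^{+}\to X^{\pm}$ and $\mathcal{F}_{s}\colon X^{\pm}\to X^{+}$ are linear operators with $V(\phi,z)|_{[-\tau,0]}=\phi$; $V^{-}\phi:=V(\phi,0_{X^{+}})$, $V^{+}z:=V(0_{X},z)$, so $V(\phi,z)=V^{-}\phi+V^{+}z$. Let $\widetilde{X}^{+}$ be a linear subspace of $X^{+}$. For $N\in\mathbb{N}$, $X_{N}^{+}$ is a finite-dimensional space, $R_{N}^{+}\colon\widetilde{X}^{+}\to X_{N}^{+}$ and $P_{N}^{+}\colon X_{N}^{+}\to X^{+}$ are linear with $R_{N}^{+}P_{N}^{+}=I_{X_{N}^{+}}$, and $\mathcal{L}_{N}^{+}:=P_{N}^{+}R_{N}^{+}$. Hypotheses: (H1) $I_{X^{+}}-\mathcal{F}_{s}V^{+}\colon X^{+}\to X^{+}$ is invertible with bounded inverse, and for each $\phi\in X$ the equation $z=\mathcal{F}_{s}V(\phi,z)$ has a unique solution in $X^{+}$. There is a linear subspace $\widehat{X}^{+}\subseteq\widetilde{X}^{+}$ with a norm $\|\cdot\|_{\widehat{X}^{+}}$ making it complete such that: (H2.1) $\|(\mathcal{L}_{N}^{+}-I_{X^{+}})|_{\widehat{X}^{+}}\|_{X^{+}\leftarrow\widehat{X}^{+}}\to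 0$ as $N\to+\infty$; (H2.4) the range of $\mathcal{F}_{s}V^{+}\colon X^{+}\to X^{+}$ is contained in $\widehat{X}^{+}$ and $\mathcal{F}_{s}V^{+}\colon X^{+}\to\widehat{X}^{+}$ is bounded. There is a linear subspace $\widehat{X}\subseteq X$ with a norm making it complete such that: (H3.1) the range of $\mathcal{F}_{s}V^{-}|_{\widehat{X}}$ is contained in $\widehat{X}^{+}$ and $\mathcal{F}_{s}V^{-}|_{\widehat{X}}\colon\widehat{X}\to\widehat{X}^{+}$ is bounded. *)

theory Defs
  imports "HOL-Analysis.Analysis"
begin

definition normed_subspace :: "'a::real_vector set \<Rightarrow> ('a \<Rightarrow> real) \<Rightarrow> bool" where
  "normed_subspace S n \<longleftrightarrow> subspace S
     \<and> (\<forall>x\<in>S. 0 \<le> n x)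
     \<and> (\<forall>x\<in>S. n x = 0 \<longleftrightarrow> x = 0)
     \<and> (\<forall>x\<in>S. \<forall>c. n (c *\<^sub>R x) = \<bar>c\<bar> * n x)
     \<and> (\<forall>x\<in>S. \<forall>y\<in>S. n (x + y) \<le> n x + n y)"

definition banach_subspace :: "'a::real_vector set \<Rightarrow> ('a \<Rightarrow> real) \<Rightarrow> bool" where
  "banach_subspace S n \<longleftrightarrow> normed_subspace S n
     \<and> (\<forall>f::nat \<Rightarrow> 'a. (\<forall>k. f k \<in> S) \<and> (\<forall>e::real>0. \<exists>M. \<forall>m\<ge>M. \<forall>k\<ge>M. n (f m - f k) < e)
            \<longrightarrow> (\<exists>l\<in>S. \<forall>e::real>0. \<exists>M. \<forall>k\<ge>M. n (f k - l) < e))"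

definition linear_on_sub :: "'a::real_vector set \<Rightarrow> ('a \<Rightarrow> 'b::real_vector) \<Rightarrow> bool" where
  "linear_on_sub S f \<longleftrightarrow> (\<forall>x\<in>S. \<forall>y\<in>S. f (x + y) = f x + f y)
     \<and> (\<forall>x\<in>S. \<forall>c. f (c *\<^sub>R x) = c *\<^sub>R f x)"

end

theory Submission
  imports Defs
begin

(* Write A = F_s V^+ and T_N = I - L_N^+ A. By (H2.1) and (H2.4), L_N^+ A converges to A in
   operator norm, so for large N the estimate ||(I - A)^-1|| ||L_N^+ A - A|| <= 1/2 yields the
   lower bound ||z|| <= 2 ||(I - A)^-1|| ||T_N z||; hence T_N is injective with the claimed bound
   on its inverse. No Neumann series is needed for surjectivity: L_N^+ A has finite rank, and an
   injective T_N maps the finite-dimensional range of L_N^+ onto itself. Both fixed-point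
   equations are affine with linear part A, so T_N (w - z) = L_N^+ z - z for their solutions w
   and z, which gives the error bound. The argument never uses completeness of the hatted spaces,
   R_N P_N = I, or the bound in (H3.1). *)

lemma linear_pair_split:
  assumes "linear (\<lambda>(x, y). V x y)"
  shows "linear (V 0)" and "V x y = V x 0 + V 0 y"
proof -
  show "linear (V 0)"
    using linear_compose[of "\<lambda>y. (0, y)", OF _ assms] by (simp add: linear_iff o_def)
  show "V x y = V x 0 + V 0 y"
    using linear_add[OF assms, of "(x, 0)" "(0, y)"] by simp
qed

lemma linear_on_sub_image_span:
  assumes "linear_on_sub (span B) f"
  shows "f ` span B \<subseteq> span (f ` B)"
proof -
  have add: "\<And>x y. x \<in> span B \<Longrightarrow> y \<in> span B \<Longrightarrow> f (x + y) = f x + f y"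
    and scale: "\<And>x c. x \<in> span B \<Longrightarrow> f (c *\<^sub>R x) = c *\<^sub>R f x"
    using assms unfolding linear_on_sub_def by auto
  have "f 0 = 0"
    using scale[OF span_zero, of 0] by simp
  then have "subspace {x \<in> span B. f x \<in> span (f ` B)}"
    unfolding subspace_def by (auto simp: add scale span_zero span_add span_scale)
  moreover have "B \<subseteq> {x \<in> span B. f x \<in> span (f ` B)}"
    by (auto intro: span_base)
  ultimately show ?thesis
    using span_minimal by blast
qed

lemma linear_on_sub_compose:
  assumes "linear_on_sub X f" "f ` X \<subseteq> Y" "linear_on_sub Y g"
  shows "linear_on_sub X (g \<circ> f)"
  using assms unfolding linear_on_sub_def by (simp add: image_subset_iff)

lemma linear_compose_linear_on_sub:
  assumes "linear A" "range A \<subseteq> X" "linear_on_sub X L"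
  shows "linear (\<lambda>z. L (A z))"
  using assms unfolding linear_on_sub_def
  by (intro linearI) (auto simp: linear_add linear_scale image_subset_iff)

lemma inj_on_linear_image_span_eq:
  fixes T :: "'a::real_vector \<Rightarrow> 'a"
  assumes lin: "linear T" and inj: "inj_on T (span C)" and fin: "finite C"
    and into: "T ` span C \<subseteq> span C"
  shows "T ` span C = span C"
proof -
  obtain B where B: "B \<subseteq> span C" "independent B" "span C \<subseteq> span B"
    using maximal_independent_subset[of "span C"] by blast
  have span_B: "span B = span C"
    using B by (metis span_eq span_span)
  have fin_B: "finite B"
    using independent_span_bound[OF fin B(2) B(1)] by auto
  have ind_TB: "independent (T ` B)"
    using linear_independent_injective_image[OF lin B(2)] inj span_B by simp
  have card_TB: "card (T ` B) = card B"
    using card_image inj B(1) by (metis inj_on_subset span_B)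
  have TB_sub: "T ` B \<subseteq> span B"
    using into B(1) span_B span_superset by blast
  have "span C \<subseteq> span (T ` B)"
  proof
    fix x assume x: "x \<in> span C"
    show "x \<in> span (T ` B)"
    proof (rule ccontr)
      assume x_notin: "x \<notin> span (T ` B)"
      then have "x \<notin> T ` B"
        using span_superset by blast
      then have "card (insert x (T ` B)) = card B + 1"
        using card_TB fin_B by simp
      moreover have "independent (insert x (T ` B))"
        using ind_TB x_notin by (simp add: independent_insert)
      then have "card (insert x (T ` B)) \<le> card B"
        using independent_span_bound[OF fin_B] x TB_sub span_B by auto
      ultimately show False by simp
    qed
  qed
  then show ?thesis
    using into span_B span_linear_image[OF lin, of B] by auto
qed

lemma surj_id_minus_finite_rank:
  fixes K :: "'a::real_vector \<Rightarrow> 'a"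
  assumes lin: "linear K" and rank: "range K \<subseteq> span C" "finite C"
    and inj: "inj (\<lambda>z. z - K z)"
  shows "surj (\<lambda>z. z - K z)"
proof -
  let ?T = "\<lambda>z. z - K z"
  have "?T ` span C \<subseteq> span C"
    using rank(1) by (auto intro: span_diff)
  then have onto: "?T ` span C = span C"
    using inj_on_linear_image_span_eq[OF _ _ rank(2)] lin inj
    by (simp add: linear_compose_sub linear_ident inj_on_subset)
  have "y \<in> range ?T" for y
  proof -
    obtain w where "?T w = K y"
      using onto rank(1) by (metis imageE range_subsetD)
    then have "?T (y + w) = y"
      by (simp add: linear_add[OF lin] algebra_simps)
    then show ?thesis by (metis rangeI)
  qed
  then show ?thesis by blast
qed

lemma norm_le_perturbed_inverse:
  fixes A L :: "'a::real_normed_vector \<Rightarrow> 'a"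
  assumes S: "bounded_linear S" "\<And>z. S (z - A z) = z"
    and close: "\<And>z. norm (L z - A z) \<le> \<delta> * norm z"
    and small: "onorm S * \<delta> \<le> 1/2"
  shows "norm z \<le> 2 * onorm S * norm (z - L z)"
proof -
  have s: "onorm S \<ge> 0"
    using onorm_pos_le[OF S(1)] .
  have "norm z \<le> onorm S * norm (z - A z)"
    using onorm[OF S(1), of "z - A z"] S(2) by simp
  also have "\<dots> \<le> onorm S * (norm (z - L z) + \<delta> * norm z)"
    using norm_triangle_ineq[of "z - L z" "L z - A z"] close[of z] s
    by (intro mult_left_mono) auto
  also have "\<dots> \<le> onorm S * norm (z - L z) + 1/2 * norm z"
    using mult_right_mono[OF small norm_ge_zero[of z]] by (simp add: algebra_simps)
  finally show ?thesis by simp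
qed

lemma bounded_linear_inv_if_norm_le:
  fixes T :: "'a::real_normed_vector \<Rightarrow> 'b::real_normed_vector"
  assumes lin: "linear T" and bij: "bij T"
    and lower: "\<And>z. norm z \<le> c * norm (T z)" and "0 \<le> c"
  shows "bounded_linear (inv T)" and "onorm (inv T) \<le> c"
proof -
  have inj: "inj T" and T_inv: "\<And>y. T (inv T y) = y"
    using bij by (auto simp: bij_def surj_f_inv_f)
  have bound: "norm (inv T y) \<le> c * norm y" for y
    using lower[of "inv T y"] T_inv by simp
  show "bounded_linear (inv T)"
  proof (rule bounded_linear_intro)
    show "inv T (x + y) = inv T x + inv T y" for x y
      by (rule inv_f_eq[OF inj]) (simp add: linear_add[OF lin] T_inv)
    show "inv T (r *\<^sub>R x) = r *\<^sub>R inv T x" for r x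
      by (rule inv_f_eq[OF inj]) (simp add: linear_scale[OF lin] T_inv)
    show "norm (inv T x) \<le> norm x * c" for x
      using bound[of x] by (simp add: mult.commute)
  qed
  show "onorm (inv T) \<le> c"
    using onorm_bound[OF \<open>0 \<le> c\<close> bound] .
qed

lemma eventually_uniform_approx_on_range:
  assumes approx: "\<And>\<epsilon>. \<epsilon> > 0 \<Longrightarrow> \<exists>M. \<forall>N\<ge>M. \<forall>x\<in>X. norm (L N x - x) \<le> \<epsilon> * n x"
    and range: "\<And>z. A z \<in> X" and bound: "\<And>z. n (A z) \<le> K * norm z"
    and "\<delta> > 0"
  shows "\<exists>M. \<forall>N\<ge>M. \<forall>z. norm (L N (A z) - A z) \<le> \<delta> * norm z"
proof -
  define \<epsilon> where "\<epsilon> = \<delta> / (\<bar>K\<bar> + 1)"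
  have \<epsilon>: "\<epsilon> > 0" "\<epsilon> * (\<bar>K\<bar> + 1) = \<delta>"
    unfolding \<epsilon>_def using \<open>\<delta> > 0\<close> by auto
  obtain M where M: "\<And>N x. N \<ge> M \<Longrightarrow> x \<in> X \<Longrightarrow> norm (L N x - x) \<le> \<epsilon> * n x"
    using approx[OF \<epsilon>(1)] by blast
  have "norm (L N (A z) - A z) \<le> \<delta> * norm z" if "N \<ge> M" for N z
  proof -
    have "norm (L N (A z) - A z) \<le> \<epsilon> * n (A z)"
      using M[OF that range] .
    also have "\<dots> \<le> \<epsilon> * (K * norm z)"
      using bound[of z] \<epsilon>(1) by simp
    also have "\<dots> \<le> \<epsilon> * ((\<bar>K\<bar> + 1) * norm z)"
      using \<epsilon>(1) by (intro mult_left_mono mult_right_mono) auto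
    also have "\<dots> = \<delta> * norm z"
      unfolding \<epsilon>(2)[symmetric] by (simp only: mult.assoc)
    finally show ?thesis .
  qed
  then show ?thesis by blast
qed

lemma finite_rank_perturbation_invertible:
  fixes A K :: "'a::real_normed_vector \<Rightarrow> 'a"
  assumes bij_A: "bij (\<lambda>z. z - A z)" and bl_A: "bounded_linear (inv (\<lambda>z. z - A z))"
    and lin: "linear K" and rank: "range K \<subseteq> span C" "finite C"
    and close: "\<And>z. norm (K z - A z) \<le> \<delta> * norm z"
    and small: "onorm (inv (\<lambda>z. z - A z)) * \<delta> \<le> 1/2"
  shows "norm z \<le> 2 * onorm (inv (\<lambda>z. z - A z)) * norm (z - K z)"
    and "bij (\<lambda>z. z - K z)"
    and "bounded_linear (inv (\<lambda>z. z - K z))"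
    and "onorm (inv (\<lambda>z. z - K z)) \<le> 2 * onorm (inv (\<lambda>z. z - A z))"
proof -
  let ?s = "onorm (inv (\<lambda>z. z - A z))"
  have lower: "norm z \<le> 2 * ?s * norm (z - K z)" for z
    using norm_le_perturbed_inverse[OF bl_A inv_f_f[OF bij_is_inj[OF bij_A]] close small] .
  then show "norm z \<le> 2 * ?s * norm (z - K z)" .
  have lin_T: "linear (\<lambda>z. z - K z)"
    by (simp add: lin linear_compose_sub linear_ident)
  have "inj (\<lambda>z. z - K z)"
  proof (rule injI)
    fix x y assume "x - K x = y - K y"
    then have "(x - y) - K (x - y) = 0"
      by (simp add: linear_diff[OF lin] algebra_simps)
    then show "x = y"
      using lower[of "x - y"] by simp
  qed
  then show bij: "bij (\<lambda>z. z - K z)"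
    using surj_id_minus_finite_rank[OF lin rank] by (simp add: bij_def)
  have "0 \<le> 2 * ?s"
    using onorm_pos_le[OF bl_A] by simp
  then show "bounded_linear (inv (\<lambda>z. z - K z))" and "onorm (inv (\<lambda>z. z - K z)) \<le> 2 * ?s"
    using bounded_linear_inv_if_norm_le[OF lin_T bij lower] by auto
qed

lemma affine_fixed_point_error:
  fixes A :: "'a::real_normed_vector \<Rightarrow> 'a"
  assumes L: "linear_on_sub X L" and A: "linear A" "range A \<subseteq> X"
    and F: "\<And>z. F z = b + A z" "b \<in> X"
    and bij: "bij (\<lambda>z. z - L (A z))" and lower: "\<And>z. norm z \<le> c * norm (z - L (A z))"
  shows "\<exists>!w. w = L (F w)"
    and "w = L (F w) \<Longrightarrow> z = F z \<Longrightarrow> norm (w - z) \<le> c * norm (L z - z)"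
proof -
  let ?T = "\<lambda>z. z - L (A z)"
  have L_F: "L (F z) = L b + L (A z)" for z
    using L F A(2) unfolding linear_on_sub_def by auto
  have fixed_iff: "w = L (F w) \<longleftrightarrow> ?T w = L b" for w
    by (auto simp: L_F algebra_simps)
  show "\<exists>!w. w = L (F w)"
    unfolding fixed_iff using bij by (simp add: bij_iff)
  assume w: "w = L (F w)" and z: "z = F z"
  have "?T (w - z) = ?T w - ?T z"
    using linear_diff[OF linear_compose_linear_on_sub[OF A L]] by (simp add: algebra_simps)
  also have "\<dots> = L z - z"
    using w z L_F[of z] by (simp add: fixed_iff algebra_simps)
  finally have T_diff: "(w - z) - L (A (w - z)) = L z - z" .
  show "norm (w - z) \<le> c * norm (L z - z)"
    using lower[of "w - z"] unfolding T_diff .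
qed

theorem proposition4p3:
  fixes V :: "'x::real_normed_vector \<Rightarrow> 'xp::real_normed_vector \<Rightarrow> 'xpm::real_normed_vector"
    and Fs :: "'xpm \<Rightarrow> 'xp"
    and Xt :: "'xp set"
    and XN :: "nat \<Rightarrow> 'xn::real_vector set"
    and R :: "nat \<Rightarrow> 'xp \<Rightarrow> 'xn"
    and P :: "nat \<Rightarrow> 'xn \<Rightarrow> 'xp"
    and Xh :: "'xp set" and nh :: "'xp \<Rightarrow> real"
    and XhX :: "'x set" and nhX :: "'x \<Rightarrow> real"
  assumes V_lin: "linear (\<lambda>(\<phi>, z). V \<phi> z)"
    and Fs_lin: "linear Fs"
    and Xt_sub: "subspace Xt"
    and XN_fin: "\<And>N. subspace (XN N) \<and> (\<exists>B. finite B \<and> XN N = span B)"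
    and R_lin: "\<And>N. linear_on_sub Xt (R N)"
    and R_range: "\<And>N. R N ` Xt \<subseteq> XN N"
    and P_lin: "\<And>N. linear_on_sub (XN N) (P N)"
    and RP: "\<And>N y. y \<in> XN N \<Longrightarrow> R N (P N y) = y"
    \<comment> \<open>(H1)\<close>
    and H1a: "bij (\<lambda>z. z - Fs (V 0 z)) \<and> bounded_linear (inv (\<lambda>z. z - Fs (V 0 z)))"
    and H1b: "\<And>\<phi>. \<exists>!z. z = Fs (V \<phi> z)"
    \<comment> \<open>hat X+\<close>
    and Xh_sub: "Xh \<subseteq> Xt"
    and Xh_banach: "banach_subspace Xh nh"
    \<comment> \<open>(H2.1): the operator norm of (L_N - I) restricted to hat X+ tends to 0\<close>
    and H21: "\<And>\<epsilon>. \<epsilon> > 0 \<Longrightarrow> \<exists>M. \<forall>N\<ge>M. \<forall>x\<in>Xh. norm (P N (R N x) - x) \<le> \<epsilon> * nh x"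
    \<comment> \<open>(H2.4)\<close>
    and H24a: "\<And>z. Fs (V 0 z) \<in> Xh"
    and H24b: "\<exists>K. \<forall>z. nh (Fs (V 0 z)) \<le> K * norm z"
    \<comment> \<open>hat X and (H3.1)\<close>
    and XhX_sub: "subspace XhX"
    and XhX_banach: "banach_subspace XhX nhX"
    and H31a: "\<And>\<phi>. \<phi> \<in> XhX \<Longrightarrow> Fs (V \<phi> 0) \<in> Xh"
    and H31b: "\<exists>K. \<forall>\<phi>\<in>XhX. nh (Fs (V \<phi> 0)) \<le> K * nhX \<phi>"
  shows "\<exists>N0::nat. N0 > 0 \<and> (\<forall>N\<ge>N0.
      bij (\<lambda>z. z - P N (R N (Fs (V 0 z))))
      \<and> bounded_linear (inv (\<lambda>z. z - P N (R N (Fs (V 0 z)))))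
      \<and> onorm (inv (\<lambda>z. z - P N (R N (Fs (V 0 z)))))
          \<le> 2 * onorm (inv (\<lambda>z. z - Fs (V 0 z)))
      \<and> (\<forall>\<phi>\<in>XhX. (\<exists>!w. w = P N (R N (Fs (V \<phi> w))))
          \<and> (\<forall>w zs. w = P N (R N (Fs (V \<phi> w))) \<longrightarrow> zs = Fs (V \<phi> zs) \<longrightarrow>
               norm (w - zs) \<le> 2 * onorm (inv (\<lambda>z. z - Fs (V 0 z)))
                                 * norm (P N (R N zs) - zs))))"
proof -
  define s where "s = onorm (inv (\<lambda>z. z - Fs (V 0 z)))"
  define \<delta> where "\<delta> = 1 / (2 * (s + 1))"
  have lin_A: "linear (\<lambda>z. Fs (V 0 z))"
    using linear_compose[OF linear_pair_split(1)[OF V_lin] Fs_lin] by (simp add: o_def)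
  have Fs_split: "Fs (V \<phi> z) = Fs (V \<phi> 0) + Fs (V 0 z)" for \<phi> z
    using linear_pair_split(2)[OF V_lin, of \<phi> z] linear_add[OF Fs_lin, of "V \<phi> 0" "V 0 z"] by simp
  have range_A: "range (\<lambda>z. Fs (V 0 z)) \<subseteq> Xt"
    using H24a Xh_sub by blast
  have "s \<ge> 0"
    unfolding s_def by (rule onorm_pos_le[OF conjunct2[OF H1a]])
  then have "\<delta> > 0" and small: "s * \<delta> \<le> 1/2"
    unfolding \<delta>_def by (auto simp: field_simps)
  obtain K where "\<And>z. nh (Fs (V 0 z)) \<le> K * norm z"
    using H24b by blast
  then obtain M where close: "\<And>N z. N \<ge> M \<Longrightarrow>
      norm (P N (R N (Fs (V 0 z))) - Fs (V 0 z)) \<le> \<delta> * norm z"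
    using eventually_uniform_approx_on_range[where L = "\<lambda>N x. P N (R N x)" and A = "\<lambda>z. Fs (V 0 z)",
        OF H21 H24a _ \<open>\<delta> > 0\<close>] by blast
  show ?thesis
  proof (intro exI[of _ "Suc M"] conjI allI impI ballI)
    show "0 < Suc M" by simp
    fix N assume "Suc M \<le> N"
    obtain B where B: "finite B" "XN N = span B"
      using XN_fin by blast
    have L: "linear_on_sub Xt (\<lambda>x. P N (R N x))"
      using linear_on_sub_compose[OF R_lin R_range P_lin] by (simp add: o_def)
    have "P N ` XN N \<subseteq> span (P N ` B)"
      using linear_on_sub_image_span[of B "P N"] P_lin[of N] B(2) by simp
    then have "range (\<lambda>z. P N (R N (Fs (V 0 z)))) \<subseteq> span (P N ` B)"
      using R_range[of N] range_A by blast
    note perturbation = finite_rank_perturbation_invertible[OF conjunct1[OF H1a] conjunct2[OF H1a]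
        linear_compose_linear_on_sub[OF lin_A range_A L] this finite_imageI[OF B(1)]
        close[OF Suc_leD[OF \<open>Suc M \<le> N\<close>]] small[unfolded s_def]]
    show "bij (\<lambda>z. z - P N (R N (Fs (V 0 z))))"
      and "bounded_linear (inv (\<lambda>z. z - P N (R N (Fs (V 0 z)))))"
      and "onorm (inv (\<lambda>z. z - P N (R N (Fs (V 0 z))))) \<le> 2 * onorm (inv (\<lambda>z. z - Fs (V 0 z)))"
      using perturbation(2-4) .
    fix \<phi> assume "\<phi> \<in> XhX"
    then have "Fs (V \<phi> 0) \<in> Xt"
      using H31a Xh_sub by blast
    note fixed_point = affine_fixed_point_error[OF L lin_A range_A Fs_split this perturbation(2,1)]
    show "\<exists>!w. w = P N (R N (Fs (V \<phi> w)))"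
      by (rule fixed_point(1))
    fix w zs assume "w = P N (R N (Fs (V \<phi> w)))" and "zs = Fs (V \<phi> zs)"
    then show "norm (w - zs) \<le> 2 * onorm (inv (\<lambda>z. z - Fs (V 0 z))) * norm (P N (R N zs) - zs)"
      by (rule fixed_point(2))
  qed
qed

end
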